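(* Let $f,g\in\mathcal{S}$ and $\tau\in\mathbb{C}$, $\tau\ne0$. Suppose there are $r_0\in(0,1)$ and $\varepsilon>0$ with $\sup_{r_0<|z|<1}|N_g(z)-N_f(z)|(1-|z|^2)<\varepsilon$. Let $\mathbf{h}=g\circ f^{-1}$. Then there exist constants $C_1,C_2>0$ such that $C_1\left(\frac{1-|z|}{1+|z|}\right)^{|\tau|\varepsilon/2}\le|[\mathbf{h}'\circ f(z)]^\tau|\le C_2\left(\frac{1+|z|}{1-|z|}\right)^{|\tau|\varepsilon/2}$ for all $z$ with $r_0<|z|<1$.
   Context: $\Delta$ unit disk; $\mathcal{S}$ the class of univalent $f$ on $\Delta$ with $f(0)=0,f'(0)=1$; $N_f=f''/f'$. Since $\mathbf{h}'\circ f=g'/f'$ is nonvanishing on $\Delta$ with value $1$ at $0$, $[\mathbf{h}'\circ f(z)]^\tau=\exp(\tau\log(\mathbf{h}'\circ f)(z))$ with the branch of the logarithm vanishing at $0$. *)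

theory Defs
  imports "HOL-Complex_Analysis.Complex_Analysis"
begin

definition classS :: "(complex \<Rightarrow> complex) \<Rightarrow> bool" where
  "classS f \<longleftrightarrow> f holomorphic_on ball 0 1 \<and> inj_on f (ball 0 1)
                 \<and> f 0 = 0 \<and> deriv f 0 = 1"

definition preSchwarzian :: "(complex \<Rightarrow> complex) \<Rightarrow> complex \<Rightarrow> complex" where
  "preSchwarzian f z = deriv (deriv f) z / deriv f z"

definition hmap :: "(complex \<Rightarrow> complex) \<Rightarrow> (complex \<Rightarrow> complex) \<Rightarrow> complex \<Rightarrow> complex" where
  "hmap f g = g \<circ> inv_into (ball 0 1) f"

definition logbranch :: "(complex \<Rightarrow> complex) \<Rightarrow> (complex \<Rightarrow> complex) \<Rightarrow> complex \<Rightarrow> complex" where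
  "logbranch f g = (SOME L. continuous_on (ball 0 1) L \<and> L 0 = 0 \<and>
      (\<forall>z\<in>ball 0 1. exp (L z) = deriv (hmap f g) (f z)))"

definition hpow :: "(complex \<Rightarrow> complex) \<Rightarrow> (complex \<Rightarrow> complex) \<Rightarrow> complex \<Rightarrow> complex \<Rightarrow> complex" where
  "hpow f g \<tau> z = exp (\<tau> * logbranch f g z)"

end

theory Submission
  imports Defs
begin

(* The chosen branch L of log (h' o f) is a holomorphic logarithm of g'/f', so L' = N_g - N_f.
   Parametrising the ray through z by |u| = tanh s turns the hypothesis
   |L'(u)| (1 - |u|^2) < eps into a bound eps on the derivative in s, hence
   |L(z)| <= M + eps artanh |z| = M + (eps/2) log ((1 + |z|)/(1 - |z|)), where M bounds |L| on
   the circle |u| = r0. Since |[h' o f]^tau| = exp (Re (tau L)), exponentiating gives both bounds. *)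

lemma continuous_log_unique:
  fixes A B :: "'a::topological_space \<Rightarrow> complex"
  assumes "connected S" "continuous_on S A" "continuous_on S B"
    and exps: "\<And>x. x \<in> S \<Longrightarrow> exp (A x) = exp (B x)"
    and "x0 \<in> S" "A x0 = B x0" "x \<in> S"
  shows "A x = B x"
proof -
  define k where "k x = (A x - B x) / (2 * pi * \<i>)" for x
  have k_Ints: "k y \<in> \<int>" if "y \<in> S" for y
  proof -
    from exps[OF that] obtain n :: int where "A y = B y + of_int (2 * n) * pi * \<i>"
      by (auto simp: exp_eq)
    then show ?thesis by (simp add: k_def)
  qed
  have "k constant_on S"
  proof (rule continuous_discrete_range_constant[OF \<open>connected S\<close>])
    show "continuous_on S k"
      unfolding k_def by (intro continuous_intros assms) simp
    show "\<exists>e>0. \<forall>y. y \<in> S \<and> k y \<noteq> k x \<longrightarrow> e \<le> norm (k y - k x)" if "x \<in> S" for x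
    proof (intro exI[of _ 1] conjI allI impI)
      fix y assume "y \<in> S \<and> k y \<noteq> k x"
      then have "k y - k x \<in> \<int>" "k y - k x \<noteq> 0"
        using k_Ints \<open>x \<in> S\<close> by auto
      then show "1 \<le> norm (k y - k x)"
        by (elim Ints_cases) (auto simp del: of_int_diff)
    qed simp
  qed
  then have "k x = k x0"
    using \<open>x0 \<in> S\<close> \<open>x \<in> S\<close> by (auto simp: constant_on_def)
  then show ?thesis
    using \<open>A x0 = B x0\<close> by (simp add: k_def)
qed

lemma tanh_artanh_real:
  fixes x :: real
  assumes "\<bar>x\<bar> < 1"
  shows "tanh (artanh x) = x"
proof -
  have "exp (- 2 * artanh x) = (1 - x) / (1 + x)"
    using assms by (simp add: artanh_def exp_minus)
  then have "tanh (artanh x) = (1 - (1 - x) / (1 + x)) / (1 + (1 - x) / (1 + x))"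
    by (simp only: tanh_real_altdef)
  also have "\<dots> = x"
    using assms by (simp add: field_simps)
  finally show ?thesis .
qed

lemma radial_increment_le_artanh:
  fixes L L' :: "complex \<Rightarrow> complex"
  assumes r0: "0 \<le> r0" "r0 < cmod z" "cmod z < 1"
    and L': "\<And>u. r0 \<le> cmod u \<Longrightarrow> cmod u < 1 \<Longrightarrow> (L has_field_derivative L' u) (at u)"
    and bound: "\<And>u. r0 < cmod u \<Longrightarrow> cmod u < 1 \<Longrightarrow> cmod (L' u) * (1 - (cmod u)\<^sup>2) \<le> \<epsilon>"
  shows "cmod (L z - L (r0 * sgn z)) \<le> \<epsilon> * (artanh (cmod z) - artanh r0)"
proof -
  define a b where "a = artanh r0" and "b = artanh (cmod z)"
  have tanh_ab: "tanh a = r0" "tanh b = cmod z"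
    using r0 by (simp_all add: a_def b_def tanh_artanh_real)
  then have "0 \<le> a" "a < b"
    using r0 by (metis tanh_real_nonneg_iff, metis tanh_real_less_iff)
  have sgn_unit: "cmod (sgn z) = 1"
    using r0 by (auto simp: norm_sgn)
  have norm_ray: "cmod (of_real (tanh s) * sgn z) = tanh s" if "a \<le> s" for s
    using that \<open>0 \<le> a\<close> sgn_unit by (simp add: norm_mult)
  define G where "G = L \<circ> (\<lambda>s. of_real (tanh s) * sgn z)"
  define V where "V s = of_real (1 - (tanh s)\<^sup>2) * sgn z * L' (of_real (tanh s) * sgn z)" for s
  have G': "(G has_vector_derivative V s) (at s)" if "a \<le> s" "s \<le> b" for s
  proof -
    have ray': "((\<lambda>s. of_real (tanh s) * sgn z)
        has_vector_derivative of_real (1 - (tanh s)\<^sup>2) * sgn z) (at s)"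
      by (auto intro!: derivative_eq_intros has_vector_derivative_real_field
          simp: has_real_derivative_iff_has_vector_derivative[symmetric])
    have "r0 \<le> cmod (of_real (tanh s) * sgn z)" "cmod (of_real (tanh s) * sgn z) < 1"
      using that tanh_ab norm_ray[of s] tanh_real_lt_1[of s] by auto
    then have "(L has_field_derivative L' (of_real (tanh s) * sgn z)) (at (of_real (tanh s) * sgn z))"
      by (rule L')
    with ray' show ?thesis
      unfolding G_def V_def by (rule field_vector_diff_chain_at)
  qed
  have "continuous_on {a..b} G"
    using G' by (meson atLeastAtMost_iff continuous_at_imp_continuous_on
        has_vector_derivative_continuous)
  then obtain s where s: "a < s" "s < b" and mvt: "cmod (G b - G a) \<le> cmod ((b - a) *\<^sub>R V s)"
    using mvt_general[OF \<open>a < b\<close>, of G "\<lambda>s h. h *\<^sub>R V s"] G'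
    by (fastforce simp: has_vector_derivative_def)
  have "cmod (V s) = cmod (L' (of_real (tanh s) * sgn z)) * (1 - (cmod (of_real (tanh s) * sgn z))\<^sup>2)"
  proof -
    have "(tanh s)\<^sup>2 < 1"
      using tanh_real_bounds[of s] by (simp add: abs_square_less_1 abs_less_iff)
    then have "cmod (of_real (1 - (tanh s)\<^sup>2)) = 1 - (tanh s)\<^sup>2"
      by (simp only: norm_of_real)
    then show ?thesis
      using s norm_ray[of s] sgn_unit unfolding V_def norm_mult by simp
  qed
  also have "\<dots> \<le> \<epsilon>"
    using s tanh_ab norm_ray[of s] tanh_real_lt_1[of s] by (intro bound) auto
  finally have "cmod (V s) \<le> \<epsilon>" .
  have "cmod (G b - G a) \<le> (b - a) * cmod (V s)"
    using mvt \<open>a < b\<close> by simp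
  also have "\<dots> \<le> (b - a) * \<epsilon>"
    using \<open>a < b\<close> \<open>cmod (V s) \<le> \<epsilon>\<close> by simp
  finally have "cmod (G b - G a) \<le> (b - a) * \<epsilon>" .
  moreover have "sgn z * of_real (cmod z) = z"
    using r0 by (simp add: sgn_eq)
  ultimately show ?thesis
    using tanh_ab by (simp add: G_def a_def b_def algebra_simps)
qed

lemma norm_le_artanh_of_hyperbolic_bound:
  fixes L L' :: "complex \<Rightarrow> complex"
  assumes r0: "0 \<le> r0" "r0 < 1" and "0 \<le> \<epsilon>"
    and L': "\<And>u. cmod u < 1 \<Longrightarrow> (L has_field_derivative L' u) (at u)"
    and bound: "\<And>u. r0 < cmod u \<Longrightarrow> cmod u < 1 \<Longrightarrow> cmod (L' u) * (1 - (cmod u)\<^sup>2) \<le> \<epsilon>"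
  obtains M where "\<And>z. r0 < cmod z \<Longrightarrow> cmod z < 1 \<Longrightarrow> cmod (L z) \<le> M + \<epsilon> * artanh (cmod z)"
proof -
  have "compact (L ` sphere 0 r0)"
    using r0 by (intro compact_continuous_image continuous_at_imp_continuous_on)
      (auto intro!: DERIV_isCont[OF L'])
  then obtain M where M: "\<And>u. u \<in> sphere 0 r0 \<Longrightarrow> cmod (L u) \<le> M"
    by (meson compact_imp_bounded bounded_iff imageI)
  have "cmod (L z) \<le> M + \<epsilon> * artanh (cmod z)" if z: "r0 < cmod z" "cmod z < 1" for z
  proof -
    have "cmod (L z) \<le> cmod (L (r0 * sgn z)) + cmod (L z - L (r0 * sgn z))"
      by (rule norm_triangle_sub)
    also have "\<dots> \<le> M + \<epsilon> * (artanh (cmod z) - artanh r0)"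
    proof (rule add_mono)
      show "cmod (L (r0 * sgn z)) \<le> M"
        using z r0 by (intro M) (auto simp: norm_mult norm_sgn)
      show "cmod (L z - L (r0 * sgn z)) \<le> \<epsilon> * (artanh (cmod z) - artanh r0)"
        using z r0 L' bound by (intro radial_increment_le_artanh) auto
    qed
    also have "\<dots> \<le> M + \<epsilon> * artanh (cmod z)"
      using r0 \<open>0 \<le> \<epsilon>\<close> by (simp add: artanh_def right_diff_distrib)
    finally show ?thesis .
  qed
  then show ?thesis by (rule that)
qed

lemma norm_exp_mult_between_powr:
  fixes \<tau> w :: complex and r :: real
  assumes w: "cmod w \<le> M + c * artanh r" and r: "\<bar>r\<bar> < 1"
  shows "exp (- cmod \<tau> * M) * ((1 - r) / (1 + r)) powr (cmod \<tau> * c / 2) \<le> cmod (exp (\<tau> * w))"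
    and "cmod (exp (\<tau> * w)) \<le> exp (cmod \<tau> * M) * ((1 + r) / (1 - r)) powr (cmod \<tau> * c / 2)"
proof -
  have "\<bar>Re (\<tau> * w)\<bar> \<le> cmod \<tau> * cmod w"
    using abs_Re_le_cmod[of "\<tau> * w"] by (simp add: norm_mult)
  also have "\<dots> \<le> cmod \<tau> * (M + c * artanh r)"
    using w by (simp add: mult_left_mono)
  finally have Re: "\<bar>Re (\<tau> * w)\<bar> \<le> cmod \<tau> * M + cmod \<tau> * c * artanh r"
    by (simp add: algebra_simps)
  have "((1 + r) / (1 - r)) powr (cmod \<tau> * c / 2) = exp (cmod \<tau> * c * artanh r)"
    using r by (simp add: powr_def artanh_def abs_less_iff)
  moreover have "((1 - r) / (1 + r)) powr (cmod \<tau> * c / 2) = exp (- (cmod \<tau> * c * artanh r))"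
  proof -
    have "ln ((1 - r) / (1 + r)) = - ln ((1 + r) / (1 - r))"
      using r by (simp add: ln_div abs_less_iff)
    then show ?thesis
      using r by (simp add: powr_def artanh_def abs_less_iff)
  qed
  ultimately show "exp (- cmod \<tau> * M) * ((1 - r) / (1 + r)) powr (cmod \<tau> * c / 2) \<le> cmod (exp (\<tau> * w))"
    and "cmod (exp (\<tau> * w)) \<le> exp (cmod \<tau> * M) * ((1 + r) / (1 - r)) powr (cmod \<tau> * c / 2)"
    using Re by (simp_all add: norm_exp_eq_Re mult_exp_exp)
qed

lemma deriv_hmap:
  assumes "f holomorphic_on ball 0 1" "inj_on f (ball 0 1)" "g holomorphic_on ball 0 1"
    and z: "z \<in> ball 0 1"
  shows "deriv (hmap f g) (f z) = deriv g z / deriv f z"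
proof -
  have "(g has_field_derivative deriv g z) (at (inv_into (ball 0 1) f (f z)))"
    using assms by (simp add: holomorphic_derivI)
  moreover have "(inv_into (ball 0 1) f has_field_derivative inverse (deriv f z)) (at (f z))"
  proof (rule has_field_derivative_inverse_strong[where f = f and x = z and S = "ball 0 1"])
    show "(f has_field_derivative deriv f z) (at z)"
      using assms by (simp add: holomorphic_derivI)
    show "deriv f z \<noteq> 0"
      using assms by (simp add: holomorphic_injective_imp_regular)
  qed (use assms holomorphic_on_imp_continuous_on in auto)
  ultimately have "(hmap f g has_field_derivative deriv g z * inverse (deriv f z)) (at (f z))"
    unfolding hmap_def o_def by (rule DERIV_chain2)
  then show ?thesis
    by (simp add: DERIV_imp_deriv divide_inverse)
qed

lemma holomorphic_log_deriv_quotient: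
  assumes S: "open S" "contractible S"
    and f: "f holomorphic_on S" "\<And>z. z \<in> S \<Longrightarrow> deriv f z \<noteq> 0"
    and g: "g holomorphic_on S" "\<And>z. z \<in> S \<Longrightarrow> deriv g z \<noteq> 0"
  obtains L where "\<And>z. z \<in> S \<Longrightarrow> exp (L z) = deriv g z / deriv f z"
    and "\<And>z. z \<in> S \<Longrightarrow> (L has_field_derivative preSchwarzian g z - preSchwarzian f z) (at z)"
proof -
  define \<Phi> where "\<Phi> z = deriv g z / deriv f z" for z
  have "\<Phi> holomorphic_on S"
    unfolding \<Phi>_def using S f g by (intro holomorphic_intros holomorphic_deriv) auto
  then obtain L where L: "L holomorphic_on S" and exp_L: "\<And>z. z \<in> S \<Longrightarrow> \<Phi> z = exp (L z)"
    using contractible_imp_holomorphic_log[OF _ \<open>contractible S\<close>] f g by (metis \<Phi>_def divide_eq_0_iff)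
  have "(L has_field_derivative preSchwarzian g z - preSchwarzian f z) (at z)" if z: "z \<in> S" for z
  proof -
    have L': "(L has_field_derivative deriv L z) (at z)"
      using L S z holomorphic_derivI by blast
    have "(\<Phi> has_field_derivative
            (deriv (deriv g) z * deriv f z - deriv g z * deriv (deriv f) z) / (deriv f z * deriv f z)) (at z)"
      unfolding \<Phi>_def using S f g z
      by (intro DERIV_divide holomorphic_derivI[of _ S] holomorphic_deriv) auto
    then have "((\<lambda>w. exp (L w)) has_field_derivative
            (deriv (deriv g) z * deriv f z - deriv g z * deriv (deriv f) z) / (deriv f z * deriv f z)) (at z)"
      using S z exp_L by (auto intro: has_field_derivative_transform_within_open)
    moreover have "((\<lambda>w. exp (L w)) has_field_derivative exp (L z) * deriv L z) (at z)"
      using L' by (auto intro!: derivative_eq_intros)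
    ultimately have "exp (L z) * deriv L z =
        (deriv (deriv g) z * deriv f z - deriv g z * deriv (deriv f) z) / (deriv f z * deriv f z)"
      by (rule DERIV_unique[rotated])
    moreover have "exp (L z) = deriv g z / deriv f z"
      using exp_L z by (simp add: \<Phi>_def)
    ultimately have "deriv L z = preSchwarzian g z - preSchwarzian f z"
      using f g z by (simp add: preSchwarzian_def field_simps)
    with L' show ?thesis by simp
  qed
  with that exp_L show ?thesis by (simp add: \<Phi>_def)
qed

lemma logbranch_has_field_derivative:
  assumes "classS f" "classS g" and z: "z \<in> ball 0 1"
  shows "(logbranch f g has_field_derivative preSchwarzian g z - preSchwarzian f z) (at z)"
proof -
  let ?B = "ball (0::complex) 1"
  have f: "f holomorphic_on ?B" "inj_on f ?B" "deriv f 0 = 1"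
    and g: "g holomorphic_on ?B" "inj_on g ?B" "deriv g 0 = 1"
    using assms by (auto simp: classS_def)
  obtain L where exp_L: "\<And>w. w \<in> ?B \<Longrightarrow> exp (L w) = deriv g w / deriv f w"
    and L': "\<And>w. w \<in> ?B \<Longrightarrow> (L has_field_derivative preSchwarzian g w - preSchwarzian f w) (at w)"
    using holomorphic_log_deriv_quotient[of ?B f g] f g
    by (metis convex_ball convex_imp_contractible holomorphic_injective_imp_regular open_ball)
  define L0 where "L0 w = L w - L 0" for w
  have L0': "(L0 has_field_derivative preSchwarzian g w - preSchwarzian f w) (at w)" if "w \<in> ?B" for w
    unfolding L0_def using L'[OF that] by (auto intro!: derivative_eq_intros)
  have L0_cont: "continuous_on ?B L0"
    using L0' by (meson DERIV_isCont continuous_at_imp_continuous_on)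
  have exp_L0: "exp (L0 w) = deriv (hmap f g) (f w)" if "w \<in> ?B" for w
    using exp_L[OF that] exp_L[of 0] f g that by (simp add: L0_def exp_diff deriv_hmap)
  have "\<exists>L. continuous_on ?B L \<and> L 0 = 0 \<and> (\<forall>w\<in>?B. exp (L w) = deriv (hmap f g) (f w))"
    using L0_cont exp_L0 by (intro exI[of _ L0]) (simp add: L0_def)
  then have "continuous_on ?B (logbranch f g) \<and> logbranch f g 0 = 0 \<and>
      (\<forall>w\<in>?B. exp (logbranch f g w) = deriv (hmap f g) (f w))"
    unfolding logbranch_def by (rule someI_ex)
  then have "logbranch f g w = L0 w" if "w \<in> ?B" for w
    using continuous_log_unique[of ?B "logbranch f g" L0 0 w] L0_cont exp_L0 that
    by (simp add: L0_def)
  then show ?thesis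
    using has_field_derivative_transform_within_open[OF L0'[OF z] open_ball z] by simp
qed

theorem mainTheorem10:
  fixes f g :: "complex \<Rightarrow> complex" and \<tau> :: complex and r0 \<epsilon> :: real
  assumes "classS f" and "classS g" and "\<tau> \<noteq> 0"
    and "0 < r0" and "r0 < 1" and "0 < \<epsilon>"
    and "(SUP z\<in>{z. r0 < cmod z \<and> cmod z < 1}.
            ereal (cmod (preSchwarzian g z - preSchwarzian f z) * (1 - (cmod z)\<^sup>2))) < ereal \<epsilon>"
  shows "\<exists>C1 C2. C1 > 0 \<and> C2 > 0 \<and>
    (\<forall>z. r0 < cmod z \<and> cmod z < 1 \<longrightarrow>
       C1 * ((1 - cmod z) / (1 + cmod z)) powr (cmod \<tau> * \<epsilon> / 2) \<le> cmod (hpow f g \<tau> z) \<and>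
       cmod (hpow f g \<tau> z) \<le> C2 * ((1 + cmod z) / (1 - cmod z)) powr (cmod \<tau> * \<epsilon> / 2))"
proof -
  define L where "L = logbranch f g"
  have L': "(L has_field_derivative preSchwarzian g u - preSchwarzian f u) (at u)"
    if "cmod u < 1" for u
    using logbranch_has_field_derivative assms(1,2) that by (simp add: L_def)
  have bound: "cmod (preSchwarzian g u - preSchwarzian f u) * (1 - (cmod u)\<^sup>2) \<le> \<epsilon>"
    if "r0 < cmod u" "cmod u < 1" for u
  proof -
    have "ereal (cmod (preSchwarzian g u - preSchwarzian f u) * (1 - (cmod u)\<^sup>2)) < ereal \<epsilon>"
      using that by (intro le_less_trans[OF SUP_upper assms(7)]) auto
    then show ?thesis by simp
  qed
  obtain M where L_growth:
      "\<And>z. r0 < cmod z \<Longrightarrow> cmod z < 1 \<Longrightarrow> cmod (L z) \<le> M + \<epsilon> * artanh (cmod z)"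
    using norm_le_artanh_of_hyperbolic_bound[of r0 \<epsilon> L "\<lambda>u. preSchwarzian g u - preSchwarzian f u"]
      L' bound assms(4-6) by auto
  show ?thesis
  proof (rule exI[of _ "exp (- cmod \<tau> * M)"], rule exI[of _ "exp (cmod \<tau> * M)"], intro conjI allI impI)
    fix z assume "r0 < cmod z \<and> cmod z < 1"
    then have "cmod (L z) \<le> M + \<epsilon> * artanh (cmod z)" "\<bar>cmod z\<bar> < 1"
      using L_growth by auto
    from norm_exp_mult_between_powr[OF this, of \<tau>]
    show "exp (- cmod \<tau> * M) * ((1 - cmod z) / (1 + cmod z)) powr (cmod \<tau> * \<epsilon> / 2) \<le> cmod (hpow f g \<tau> z)"
      and "cmod (hpow f g \<tau> z) \<le> exp (cmod \<tau> * M) * ((1 + cmod z) / (1 - cmod z)) powr (cmod \<tau> * \<epsilon> / 2)"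
      by (simp_all add: hpow_def L_def)
  qed simp_all
qed

end
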